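(* Consider attribution mechanisms $M$ that map every finite reported cooperative game $([m],v)$ (with $v(\emptyset)=0$) to a payment vector $M(v)=(p_1,\ldots,p_m)\in\mathbb{R}^m$. Within the class of all finite monotone data-value games, no attribution mechanism can satisfy both of the following properties: (1) Exact reported-game Shapley fairness: for every submitted game $([m],v)$ and every submitted identity $j\in[m]$, $p_j=\mathrm{Sh}_j(v)$, the Shapley value of $j$ in $v$. (2) Unrestricted false-name-proofness: no latent provider can increase its total payment (the sum of payments to all identities it controls) by replacing one honest identity with finitely many submitted identities. Moreover, the conflict holds even when all value functions in question are monotone and take values in $\{0,1\}$.
   Context: Setting: latent data providers submit datasets under identities; the reported game on the set of submitted identities $[m]$ is $v(T)=U(A(\biguplus_{j\in T}S_j))-U(A(\emptyset))$ for a learner $A$ and utility $U$, so $v(\emptyset)=0$. A game is monotone if $T\subseteq T'$ implies $v(T)\le v(T')$. A false-name split by a latent provider $i$ replaces the single identity $i$ by $k\ge 2$ submitted identities $i^1,\dots,i^k$ whose datasets jointly make up $i$'s data; the reported game is then a game on the new identity set, which in the class considered may be any finite monotone game (e.g., a split of player $A$ of the two-player unanimity game $v(\{A,B\})=1$, $v=0$ otherwise, may yield the three-player unanimity game $v'(T)=\mathbf{1}\{\{A_1,A_2,B\}\subseteq T\}$). The latent provider's payment after the split is the sum of the payments to its pseudonyms. The Shapley value is $\mathrm{Sh}_j(v)=\sum_{T\subseteq[m]\setminus\{j\}}\frac{|T|!(m-|T|-1)!}{m!}\,(v(T\cup\{j\})-v(T))$. *)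

theory Defs
  imports Main Complex_Main
begin

text \<open>A reported game on the identity set [m] = {0..<m} is a pair (m, v) with
  v :: nat set => real; only the values on subsets of {..<m} are relevant.\<close>

definition game :: "nat \<Rightarrow> (nat set \<Rightarrow> real) \<Rightarrow> bool" where
  "game m v \<longleftrightarrow> v {} = 0"

definition monotone_game :: "nat \<Rightarrow> (nat set \<Rightarrow> real) \<Rightarrow> bool" where
  "monotone_game m v \<longleftrightarrow> game m v \<and>
     (\<forall>T T'. T \<subseteq> T' \<and> T' \<subseteq> {..<m} \<longrightarrow> v T \<le> v T')"

definition zero_one_game :: "nat \<Rightarrow> (nat set \<Rightarrow> real) \<Rightarrow> bool" where
  "zero_one_game m v \<longleftrightarrow> (\<forall>T \<subseteq> {..<m}. v T \<in> {0, 1})"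

definition shapley :: "nat \<Rightarrow> (nat set \<Rightarrow> real) \<Rightarrow> nat \<Rightarrow> real" where
  "shapley m v j = (\<Sum>T\<in>Pow ({..<m} - {j}).
      (fact (card T) * fact (m - card T - 1) / fact m) * (v (T \<union> {j}) - v T))"

type_synonym mechanism = "nat \<Rightarrow> (nat set \<Rightarrow> real) \<Rightarrow> nat \<Rightarrow> real"

text \<open>False-name split: the game (m', v') arises from (m, v) by latent provider i < m
  replacing its identity by k >= 2 pseudonyms.\<close>
definition false_name_split ::
  "nat \<Rightarrow> (nat set \<Rightarrow> real) \<Rightarrow> nat \<Rightarrow> nat \<Rightarrow> (nat set \<Rightarrow> real) \<Rightarrow> (nat \<Rightarrow> nat) \<Rightarrow> bool" where
  "false_name_split m v i m' v' \<sigma> \<longleftrightarrow>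
     i < m \<and> \<sigma> ` {..<m'} = {..<m} \<and>
     card {j\<in>{..<m'}. \<sigma> j = i} \<ge> 2 \<and>
     (\<forall>l<m. l \<noteq> i \<longrightarrow> card {j\<in>{..<m'}. \<sigma> j = l} = 1) \<and>
     (\<forall>T \<subseteq> {..<m}. v' ({j\<in>{..<m'}. \<sigma> j \<in> T}) = v T)"

definition shapley_fair_on ::
  "(nat \<Rightarrow> (nat set \<Rightarrow> real) \<Rightarrow> bool) \<Rightarrow> mechanism \<Rightarrow> bool" where
  "shapley_fair_on C M \<longleftrightarrow>
     (\<forall>m v. C m v \<longrightarrow> (\<forall>j<m. M m v j = shapley m v j))"

definition false_name_proof_on ::
  "(nat \<Rightarrow> (nat set \<Rightarrow> real) \<Rightarrow> bool) \<Rightarrow> mechanism \<Rightarrow> bool" where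
  "false_name_proof_on C M \<longleftrightarrow>
     (\<forall>m v i m' v' \<sigma>. C m v \<and> C m' v' \<and> false_name_split m v i m' v' \<sigma> \<longrightarrow>
        (\<Sum>j\<in>{j\<in>{..<m'}. \<sigma> j = i}. M m' v' j) \<le> M m v i)"

end

theory Submission
  imports Defs
begin

text \<open>In the unanimity game on \<open>n\<close> players each player receives Shapley value \<open>1/n\<close>.
  A provider of the two-player unanimity game who splits into two pseudonyms produces the
  three-player unanimity game and collects \<open>2/3 > 1/2\<close>; more generally, splitting one
  player of the \<open>n\<close>-player unanimity game into \<open>k + 1\<close> pseudonyms yields
  \<open>(k + 1)/(n + k) > 1/n\<close> whenever \<open>n \<ge> 2\<close>. So Shapley fairness forces a profitable
  false-name split, already among monotone \<open>{0,1}\<close>-valued games.\<close>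

lemma shapley_fair_on_mono:
  assumes "\<And>m v. C m v \<Longrightarrow> D m v" and "shapley_fair_on D M"
  shows "shapley_fair_on C M"
  using assms unfolding shapley_fair_on_def by blast

lemma false_name_proof_on_mono:
  assumes "\<And>m v. C m v \<Longrightarrow> D m v" and "false_name_proof_on D M"
  shows "false_name_proof_on C M"
  using assms unfolding false_name_proof_on_def by blast

lemma not_shapley_fair_and_false_name_proof_if_profitable_split:
  assumes "C m v" "C m' v'" and split: "false_name_split m v i m' v' \<sigma>"
    and profitable: "shapley m v i < (\<Sum>j\<in>{j\<in>{..<m'}. \<sigma> j = i}. shapley m' v' j)"
  shows "\<not> (shapley_fair_on C M \<and> false_name_proof_on C M)"
proof
  assume "shapley_fair_on C M \<and> false_name_proof_on C M"
  then have fair: "\<And>m v j. C m v \<Longrightarrow> j < m \<Longrightarrow> M m v j = shapley m v j"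
    and no_gain: "(\<Sum>j\<in>{j\<in>{..<m'}. \<sigma> j = i}. M m' v' j) \<le> M m v i"
    using assms unfolding shapley_fair_on_def false_name_proof_on_def by blast+
  have "i < m" using split unfolding false_name_split_def by blast
  then have "M m v i = shapley m v i" using fair \<open>C m v\<close> by blast
  moreover have "(\<Sum>j\<in>{j\<in>{..<m'}. \<sigma> j = i}. M m' v' j) =
      (\<Sum>j\<in>{j\<in>{..<m'}. \<sigma> j = i}. shapley m' v' j)"
    using fair \<open>C m' v'\<close> by (intro sum.cong) auto
  ultimately show False using no_gain profitable by linarith
qed

definition unanimity :: "nat \<Rightarrow> nat set \<Rightarrow> real" where
  "unanimity n T = (if {..<n} \<subseteq> T then 1 else 0)"

lemma zero_one_game_unanimity: "zero_one_game m (unanimity n)"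
  unfolding zero_one_game_def unanimity_def by simp

lemma monotone_game_unanimity:
  assumes "0 < n"
  shows "monotone_game m (unanimity n)"
  using assms unfolding monotone_game_def game_def unanimity_def by auto

lemma shapley_unanimity:
  assumes "j < n"
  shows "shapley n (unanimity n) j = 1 / n"
proof -
  define R where "R = {..<n} - {j}"
  have marginal: "unanimity n (T \<union> {j}) - unanimity n T = (if T = R then 1 else 0)"
    if "T \<in> Pow R" for T
    using that assms unfolding unanimity_def R_def by auto
  have "card R = n - 1" using assms unfolding R_def by simp
  then have weight: "fact (card R) * fact (n - card R - 1) / fact n = (1 / n :: real)"
    using assms by (cases n) (auto simp: divide_simps)
  have "shapley n (unanimity n) j =
      (\<Sum>T\<in>Pow R. if T = R then fact (card R) * fact (n - card R - 1) / fact n else 0)"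
    unfolding shapley_def R_def[symmetric] by (intro sum.cong refl) (simp only: marginal, simp)
  also have "\<dots> = 1 / n"
    using weight by (simp add: R_def)
  finally show ?thesis .
qed

lemma pseudonyms_of_first_identity:
  fixes n k :: nat
  assumes "0 < n"
  shows "{j\<in>{..<n + k}. (if j < n then j else 0) = 0} = insert 0 {n..<n + k}"
  using assms by (auto split: if_splits)

lemma false_name_split_unanimity:
  assumes "0 < n" "0 < k"
  shows "false_name_split n (unanimity n) 0 (n + k) (unanimity (n + k))
           (\<lambda>j. if j < n then j else 0)"
  unfolding false_name_split_def
proof (intro conjI allI impI)
  show "(\<lambda>j. if j < n then j else 0) ` {..<n + k} = {..<n}"
    using assms by (force simp: image_iff)
  show "2 \<le> card {j\<in>{..<n + k}. (if j < n then j else 0) = 0}"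
    unfolding pseudonyms_of_first_identity[OF \<open>0 < n\<close>] using assms by simp
  show "card {j\<in>{..<n + k}. (if j < n then j else 0) = l} = 1" if "l < n" "l \<noteq> 0" for l
  proof -
    have "{j\<in>{..<n + k}. (if j < n then j else 0) = l} = {l}"
      using that by auto
    then show ?thesis by simp
  qed
  show "unanimity (n + k) {j\<in>{..<n + k}. (if j < n then j else 0) \<in> T} = unanimity n T"
    if "T \<subseteq> {..<n}" for T
  proof -
    have "{..<n + k} \<subseteq> {j\<in>{..<n + k}. (if j < n then j else 0) \<in> T} \<longleftrightarrow> {..<n} \<subseteq> T"
    proof
      assume all: "{..<n + k} \<subseteq> {j\<in>{..<n + k}. (if j < n then j else 0) \<in> T}"
      show "{..<n} \<subseteq> T"
      proof
        fix j assume "j \<in> {..<n}"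
        then have "j \<in> {..<n + k}" by simp
        with all have "(if j < n then j else 0) \<in> T" by blast
        with \<open>j \<in> {..<n}\<close> show "j \<in> T" by simp
      qed
    next
      assume "{..<n} \<subseteq> T"
      then show "{..<n + k} \<subseteq> {j\<in>{..<n + k}. (if j < n then j else 0) \<in> T}"
        using \<open>0 < n\<close> by auto
    qed
    then show ?thesis unfolding unanimity_def by simp
  qed
qed (use assms in simp)

lemma shapley_gain_of_splitting_unanimity:
  assumes "0 < n"
  shows "(\<Sum>j\<in>{j\<in>{..<n + k}. (if j < n then j else 0) = 0}. shapley (n + k) (unanimity (n + k)) j)
           = (k + 1) / (n + k)"
proof -
  have "(\<Sum>j\<in>insert 0 {n..<n + k}. shapley (n + k) (unanimity (n + k)) j)
      = (\<Sum>j\<in>insert 0 {n..<n + k}. 1 / (n + k))"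
    using assms by (intro sum.cong refl) (auto simp: shapley_unanimity)
  also have "\<dots> = (k + 1) / (n + k)"
    using assms by simp
  finally show ?thesis unfolding pseudonyms_of_first_identity[OF assms] by simp
qed

lemma splitting_unanimity_profitable:
  assumes "2 \<le> n" "0 < k"
  shows "shapley n (unanimity n) 0 <
    (\<Sum>j\<in>{j\<in>{..<n + k}. (if j < n then j else 0) = 0}. shapley (n + k) (unanimity (n + k)) j)"
proof -
  have "real n + real k < (real k + 1) * real n"
    using assms by (simp add: algebra_simps)
  moreover have "0 < n" using assms by simp
  ultimately show ?thesis
    unfolding shapley_gain_of_splitting_unanimity[OF \<open>0 < n\<close>]
    using assms by (simp add: shapley_unanimity divide_simps)
qed

theorem theorem1:
  shows "(\<nexists>M. shapley_fair_on monotone_game M \<and> false_name_proof_on monotone_game M) \<and>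
         (\<nexists>M. shapley_fair_on (\<lambda>m v. monotone_game m v \<and> zero_one_game m v) M \<and>
              false_name_proof_on (\<lambda>m v. monotone_game m v \<and> zero_one_game m v) M)"
proof -
  let ?C01 = "\<lambda>m v. monotone_game m v \<and> zero_one_game m v"
  have zero_one_case: "\<not> (shapley_fair_on ?C01 M \<and> false_name_proof_on ?C01 M)" for M
  proof (rule not_shapley_fair_and_false_name_proof_if_profitable_split)
    show "?C01 2 (unanimity 2)" "?C01 (2 + 1) (unanimity (2 + 1))"
      by (simp_all add: monotone_game_unanimity zero_one_game_unanimity)
    show "false_name_split 2 (unanimity 2) 0 (2 + 1) (unanimity (2 + 1)) (\<lambda>j. if j < 2 then j else 0)"
      by (rule false_name_split_unanimity) simp_all
  qed (rule splitting_unanimity_profitable; simp)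
  moreover have "\<not> (shapley_fair_on monotone_game M \<and> false_name_proof_on monotone_game M)" for M
    using zero_one_case[of M] shapley_fair_on_mono[of ?C01 monotone_game M]
      false_name_proof_on_mono[of ?C01 monotone_game M] by blast
  ultimately show ?thesis by blast
qed

end
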